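(* Let $k$ be an algebraically closed field of characteristic zero and let $X\subset\mathbb P^n$ be a chain of closed subvarieties $X_1,\dots,X_\ell$ with saturated ideal $I_X=\bigcap_i I_{X_i}\subset k[x_0,\dots,x_n]$, such that for some integers $n_0=0<n_1<\cdots<n_\ell=n$ one has $X_i\subset\{x_0=\cdots=x_{n_{i-1}-1}=0,\ x_{n_i+1}=\cdots=x_n=0\}$ for all $i$. Let $\rho:\mathbb G_m\to\mathrm{GL}_{n+1}$ be a one-parameter subgroup diagonalized by $x_0,\dots,x_n$ with weights $(r_0,\dots,r_n)$, and let $\rho_i$ be the restriction of $\rho$ to $\mathrm{GL}(kx_{n_{i-1}}+\cdots+kx_{n_i})$. Regard $X_i$ as the subvariety of $\mathbb P^{n_i-n_{i-1}}$ defined by $I_{X_i}\cap k[x_{n_{i-1}},\dots,x_{n_i}]$. Let $P(m)$ be the Hilbert polynomial of $I_X$ and $P_i(m)$ the Hilbert polynomial of $I_{X_i}\cap k[x_{n_{i-1}},\dots,x_{n_i}]$ as an ideal of $k[x_{n_{i-1}},\dots,x_{n_i}]$. Then for $m$ as below, \[ \mu([X]_m^\star,\rho)=\sum_{i=1}^\ell\mu([X_i]_m^\star,\rho_i)-\sum_{i=1}^\ell\frac{mP_i(m)}{n_i-n_{i-1}+1}\sum_{k=n_{i-1}}^{n_i}r_k+\frac{mP(m)}{n+1}\sum_{i=0}^n r_i+m\sum_{i=1}^{\ell-1}r_{n_i}. \]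
   Context: A chain of subvarieties means $X=\bigcup_iX_i$ and $X_i\cap X_j\neq\emptyset$ iff $|i-j|=1$. Here $m$ is a positive integer at least the Castelnuovo–Mumford regularity of all ideals involved, so that Hilbert points are defined and the dimension of the degree-$m$ part of each quotient ring equals the value of its Hilbert polynomial at $m$. For a homogeneous ideal $J\subset k[y_0,\dots,y_N]$ defining $Y\subset\mathbb P^N$ with Hilbert polynomial $P_Y$, and a one-parameter subgroup $\rho$ diagonal in $y_0,\dots,y_N$ with weights $(r_0,\dots,r_N)$, the Hilbert–Mumford index of the $m$th dual Hilbert point $[Y]_m^\star=[S_m\to S_m/J_m]$ is given by $\mu([Y]_m^\star,\rho)=-\sum_{x^\alpha}\mathrm{wt}_\rho(x^\alpha)+\frac{mP_Y(m)}{N+1}\sum_{i=0}^N r_i$, the sum over degree-$m$ monomials $x^\alpha$ not in $\mathrm{in}_{\prec_\rho}(J)$, where $\mathrm{wt}_\rho(x^\alpha)=\sum\alpha_i r_i$ and $\prec_\rho$ is the $\rho$-weighted order (monomials compared first by $\rho$-weight, ties broken by a fixed monomial order), used consistently for all ideals and restricted to the relevant subrings. *)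

theory Defs
  imports "HOL-Library.Poly_Mapping" "HOL-Computational_Algebra.Polynomial"
begin

text \<open>Multivariate polynomials over a field 'k in the variables x_0, x_1, ...:
  finitely supported maps from exponent vectors (nat =>0 nat) to coefficients.\<close>
type_synonym 'k mpoly = "(nat \<Rightarrow>\<^sub>0 nat) \<Rightarrow>\<^sub>0 'k"

definition alg_closed :: "'k::field itself \<Rightarrow> bool" where
  "alg_closed _ \<longleftrightarrow> (\<forall>p :: 'k poly. degree p > 0 \<longrightarrow> (\<exists>x. poly p x = 0))"

definition mdeg :: "(nat \<Rightarrow>\<^sub>0 nat) \<Rightarrow> nat" where
  "mdeg \<alpha> = (\<Sum>i\<in>Poly_Mapping.keys \<alpha>. Poly_Mapping.lookup \<alpha> i)"

definition in_vars :: "nat set \<Rightarrow> 'k::zero mpoly \<Rightarrow> bool" where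
  "in_vars V f \<longleftrightarrow> (\<forall>\<alpha>\<in>Poly_Mapping.keys f. Poly_Mapping.keys \<alpha> \<subseteq> V)"

definition homog :: "nat \<Rightarrow> 'k::zero mpoly \<Rightarrow> bool" where
  "homog t f \<longleftrightarrow> (\<forall>\<alpha>\<in>Poly_Mapping.keys f. mdeg \<alpha> = t)"

definition deg_part :: "nat set \<Rightarrow> nat \<Rightarrow> 'k::zero mpoly set" where
  "deg_part V t = {f. in_vars V f \<and> homog t f}"

definition mscale :: "'k::field \<Rightarrow> 'k mpoly \<Rightarrow> 'k mpoly" where
  "mscale c f = Poly_Mapping.map (\<lambda>a. c * a) f"

definition kdim :: "'k::field mpoly set \<Rightarrow> nat" where
  "kdim W = vector_space.dim (mscale :: 'k \<Rightarrow> 'k mpoly \<Rightarrow> 'k mpoly) W"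

definition hilb_fun :: "nat set \<Rightarrow> 'k::field mpoly set \<Rightarrow> nat \<Rightarrow> nat" where
  "hilb_fun V J t = kdim (deg_part V t :: 'k mpoly set) - kdim (deg_part V t \<inter> J)"

definition is_hilbert_poly :: "nat set \<Rightarrow> 'k::field mpoly set \<Rightarrow> rat poly \<Rightarrow> bool" where
  "is_hilbert_poly V J P \<longleftrightarrow> (\<exists>t0. \<forall>t\<ge>t0. of_nat (hilb_fun V J t) = poly P (of_nat t))"

definition evalp :: "'k::comm_ring_1 mpoly \<Rightarrow> (nat \<Rightarrow> 'k) \<Rightarrow> 'k" where
  "evalp f v = (\<Sum>\<alpha>\<in>Poly_Mapping.keys f. Poly_Mapping.lookup f \<alpha> * (\<Prod>i\<in>Poly_Mapping.keys \<alpha>. v i ^ Poly_Mapping.lookup \<alpha> i))"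

text \<open>Points of P^n, represented by their (nonzero) affine cones in k^{n+1}:
  subsets of projective space are represented as scaling-invariant sets of nonzero vectors.\<close>
definition proj_pts :: "nat \<Rightarrow> (nat \<Rightarrow> 'k::zero) set" where
  "proj_pts n = {v. v \<noteq> (\<lambda>_. 0) \<and> (\<forall>j>n. v j = 0)}"

definition zero_set :: "nat \<Rightarrow> 'k::comm_ring_1 mpoly set \<Rightarrow> (nat \<Rightarrow> 'k) set" where
  "zero_set n F = {v\<in>proj_pts n. \<forall>f\<in>F. evalp f v = 0}"

definition proj_closed :: "nat \<Rightarrow> (nat \<Rightarrow> 'k::comm_ring_1) set \<Rightarrow> bool" where
  "proj_closed n X \<longleftrightarrow> (\<exists>F. (\<forall>f\<in>F. in_vars {0..n} f \<and> (\<exists>t. homog t f)) \<and> X = zero_set n F)"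

definition proj_subvariety :: "nat \<Rightarrow> (nat \<Rightarrow> 'k::comm_ring_1) set \<Rightarrow> bool" where
  "proj_subvariety n X \<longleftrightarrow> proj_closed n X \<and> X \<noteq> {} \<and>
     (\<forall>A B. proj_closed n A \<and> proj_closed n B \<and> X = A \<union> B \<longrightarrow> X = A \<or> X = B)"

definition van_ideal :: "nat \<Rightarrow> (nat \<Rightarrow> 'k::comm_ring_1) set \<Rightarrow> 'k mpoly set" where
  "van_ideal n X = {f. in_vars {0..n} f \<and> (\<forall>v\<in>X. evalp f v = 0)}"

definition monomial_order :: "((nat \<Rightarrow>\<^sub>0 nat) \<Rightarrow> (nat \<Rightarrow>\<^sub>0 nat) \<Rightarrow> bool) \<Rightarrow> bool" where
  "monomial_order lt \<longleftrightarrow>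
     (\<forall>a. \<not> lt a a) \<and> (\<forall>a b c. lt a b \<longrightarrow> lt b c \<longrightarrow> lt a c) \<and>
     (\<forall>a b. lt a b \<or> a = b \<or> lt b a) \<and> wf {(a, b). lt a b} \<and>
     (\<forall>a b c. lt a b \<longrightarrow> lt (a + c) (b + c))"

definition wt :: "(nat \<Rightarrow> int) \<Rightarrow> (nat \<Rightarrow>\<^sub>0 nat) \<Rightarrow> int" where
  "wt r \<alpha> = (\<Sum>i\<in>Poly_Mapping.keys \<alpha>. int (Poly_Mapping.lookup \<alpha> i) * r i)"

definition wlt :: "(nat \<Rightarrow> int) \<Rightarrow> ((nat \<Rightarrow>\<^sub>0 nat) \<Rightarrow> (nat \<Rightarrow>\<^sub>0 nat) \<Rightarrow> bool)
                   \<Rightarrow> (nat \<Rightarrow>\<^sub>0 nat) \<Rightarrow> (nat \<Rightarrow>\<^sub>0 nat) \<Rightarrow> bool" where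
  "wlt r lt \<alpha> \<beta> \<longleftrightarrow> wt r \<alpha> < wt r \<beta> \<or> (wt r \<alpha> = wt r \<beta> \<and> lt \<alpha> \<beta>)"

definition lead_exp :: "(nat \<Rightarrow> int) \<Rightarrow> ((nat \<Rightarrow>\<^sub>0 nat) \<Rightarrow> (nat \<Rightarrow>\<^sub>0 nat) \<Rightarrow> bool)
                        \<Rightarrow> 'k::zero mpoly \<Rightarrow> (nat \<Rightarrow>\<^sub>0 nat)" where
  "lead_exp r lt f = (THE \<alpha>. \<alpha> \<in> Poly_Mapping.keys f \<and> (\<forall>\<beta>\<in>Poly_Mapping.keys f. \<beta> \<noteq> \<alpha> \<longrightarrow> wlt r lt \<beta> \<alpha>))"

definition init_mons :: "(nat \<Rightarrow> int) \<Rightarrow> ((nat \<Rightarrow>\<^sub>0 nat) \<Rightarrow> (nat \<Rightarrow>\<^sub>0 nat) \<Rightarrow> bool)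
                         \<Rightarrow> 'k::zero mpoly set \<Rightarrow> (nat \<Rightarrow>\<^sub>0 nat) set" where
  "init_mons r lt J = {lead_exp r lt f + \<gamma> | f \<gamma>. f \<in> J \<and> f \<noteq> 0}"

definition hm_index :: "nat set \<Rightarrow> 'k::zero mpoly set \<Rightarrow> rat poly \<Rightarrow> (nat \<Rightarrow> int)
      \<Rightarrow> ((nat \<Rightarrow>\<^sub>0 nat) \<Rightarrow> (nat \<Rightarrow>\<^sub>0 nat) \<Rightarrow> bool) \<Rightarrow> nat \<Rightarrow> rat" where
  "hm_index V J P r lt m =
     - (\<Sum>\<alpha>\<in>{\<alpha>. mdeg \<alpha> = m \<and> Poly_Mapping.keys \<alpha> \<subseteq> V \<and> \<alpha> \<notin> init_mons r lt J}. of_int (wt r \<alpha>))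
     + of_nat m * poly P (of_nat m) / of_nat (card V) * of_int (\<Sum>i\<in>V. r i)"

end

theory Submission
  imports Defs "HOL-Library.FuncSet"
begin

text \<open>Up to its linear term, the Hilbert--Mumford index is minus the total weight of the
  standard monomials of degree m, those outside the initial ideal. As X_i lies in the span of
  the coordinate block x_{n_{i-1}}, ..., x_{n_i}, a monomial not supported on a single block
  vanishes on X. A monomial supported on block i is a leading monomial of I_X iff it is one of
  the block ideal of X_i: restricting a polynomial to the block variables keeps its leading
  monomial and its vanishing on X_i; conversely X_i meets X_{i+1} in the coordinate point
  x_{n_i}, so a block polynomial vanishing on X_i has no pure power of x_{n_{i-1}} or x_{n_i}
  and therefore vanishes on every other component, which sees block i only through these
  variables. Thus the standard monomials of X are the union of those of the X_i, where
  consecutive blocks share exactly x_{n_i}^m, whose weight m r_{n_i} is counted twice.\<close>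

lemma wlt_irrefl: "monomial_order lt \<Longrightarrow> \<not> wlt r lt a a"
  by (auto simp: monomial_order_def wlt_def)

lemma wlt_trans: "monomial_order lt \<Longrightarrow> wlt r lt a b \<Longrightarrow> wlt r lt b c \<Longrightarrow> wlt r lt a c"
  unfolding monomial_order_def wlt_def by (metis order.strict_trans)

lemma wlt_linear: "monomial_order lt \<Longrightarrow> a \<noteq> b \<Longrightarrow> wlt r lt a b \<or> wlt r lt b a"
  unfolding monomial_order_def wlt_def by (metis linorder_neqE)

lemma wlt_greatest_exists:
  assumes mo: "monomial_order lt" and "finite K" "K \<noteq> {}"
  shows "\<exists>\<alpha>\<in>K. \<forall>\<beta>\<in>K. \<beta> \<noteq> \<alpha> \<longrightarrow> wlt r lt \<beta> \<alpha>"
  using assms(2,3)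
proof (induction K rule: finite_ne_induct)
  case (singleton x)
  then show ?case by auto
next
  case (insert x F)
  then obtain a where a: "a \<in> F" "\<forall>\<beta>\<in>F. \<beta> \<noteq> a \<longrightarrow> wlt r lt \<beta> a"
    by blast
  show ?case
  proof (cases "wlt r lt a x")
    case True
    then have "\<forall>\<beta>\<in>insert x F. \<beta> \<noteq> x \<longrightarrow> wlt r lt \<beta> x"
      using a wlt_trans[OF mo, of r _ a x] by auto
    then show ?thesis by blast
  next
    case False
    then have "wlt r lt x a"
      using wlt_linear[OF mo, of x a] insert.hyps a(1) by blast
    then show ?thesis using a by blast
  qed
qed

lemma lead_exp_eqI:
  assumes mo: "monomial_order lt" and "a \<in> Poly_Mapping.keys f"
    and "\<forall>\<beta>\<in>Poly_Mapping.keys f. \<beta> \<noteq> a \<longrightarrow> wlt r lt \<beta> a"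
  shows "lead_exp r lt f = a"
  unfolding lead_exp_def
proof (rule the_equality)
  fix b assume "b \<in> Poly_Mapping.keys f \<and> (\<forall>\<beta>\<in>Poly_Mapping.keys f. \<beta> \<noteq> b \<longrightarrow> wlt r lt \<beta> b)"
  then show "b = a"
    using assms wlt_irrefl[OF mo] wlt_trans[OF mo] by metis
qed (use assms in blast)

lemma lead_exp_greatest:
  assumes mo: "monomial_order lt" and "f \<noteq> 0"
  shows "lead_exp r lt f \<in> Poly_Mapping.keys f"
    and "\<forall>\<beta>\<in>Poly_Mapping.keys f. \<beta> \<noteq> lead_exp r lt f \<longrightarrow> wlt r lt \<beta> (lead_exp r lt f)"
proof -
  obtain a where a: "a \<in> Poly_Mapping.keys f" "\<forall>\<beta>\<in>Poly_Mapping.keys f. \<beta> \<noteq> a \<longrightarrow> wlt r lt \<beta> a"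
    using wlt_greatest_exists[OF mo, of "Poly_Mapping.keys f"] assms(2) by auto
  with lead_exp_eqI[OF mo a] show "lead_exp r lt f \<in> Poly_Mapping.keys f"
    and "\<forall>\<beta>\<in>Poly_Mapping.keys f. \<beta> \<noteq> lead_exp r lt f \<longrightarrow> wlt r lt \<beta> (lead_exp r lt f)"
    by simp_all
qed

lemma lead_exp_single:
  "monomial_order lt \<Longrightarrow> c \<noteq> 0 \<Longrightarrow> lead_exp r lt (Poly_Mapping.single \<alpha> c) = \<alpha>"
  by (rule lead_exp_eqI) auto

lemma init_mons_mono: "J \<subseteq> J' \<Longrightarrow> init_mons r lt J \<subseteq> init_mons r lt J'"
  by (auto simp: init_mons_def)

lemma single_in_init_mons:
  fixes J :: "'k::zero_neq_one mpoly set"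
  assumes "monomial_order lt" and "Poly_Mapping.single \<alpha> 1 \<in> J"
  shows "\<alpha> \<in> init_mons r lt J"
proof -
  have "lead_exp r lt (Poly_Mapping.single \<alpha> (1::'k)) + 0 \<in> init_mons r lt J"
    unfolding init_mons_def using assms(2)
    by (metis (mono_tags, lifting) CollectI lookup_single_eq lookup_zero one_neq_zero)
  then show ?thesis by (simp add: lead_exp_single[OF assms(1)])
qed

lemma keys_subset_add: "Poly_Mapping.keys \<beta> \<subseteq> Poly_Mapping.keys (\<beta> + (\<gamma>::nat \<Rightarrow>\<^sub>0 nat))"
  by (auto simp: in_keys_iff lookup_add)

lemma keys_subset_singleton_eq:
  "Poly_Mapping.keys \<alpha> \<subseteq> {c} \<Longrightarrow> \<alpha> = Poly_Mapping.single c (Poly_Mapping.lookup \<alpha> c)"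
  by (rule poly_mapping_eqI)
    (metis in_keys_iff lookup_single_eq lookup_single_not_eq singletonD subsetD)

lemma mdeg_single: "mdeg (Poly_Mapping.single c k) = k"
  by (simp add: mdeg_def)

lemma lookup_le_mdeg: "Poly_Mapping.lookup \<alpha> i \<le> mdeg \<alpha>"
  unfolding mdeg_def by (cases "i \<in> Poly_Mapping.keys \<alpha>") (auto intro: member_le_sum simp: in_keys_iff)

lemma wt_single: "wt r (Poly_Mapping.single c m) = int m * r c"
  by (simp add: wt_def)

lemma finite_monomials_of_degree:
  assumes "finite V"
  shows "finite {\<alpha>. mdeg \<alpha> = m \<and> Poly_Mapping.keys \<alpha> \<subseteq> V}"
proof -
  let ?A = "{\<alpha>. mdeg \<alpha> = m \<and> Poly_Mapping.keys \<alpha> \<subseteq> V}"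
  let ?h = "\<lambda>\<alpha>. restrict (Poly_Mapping.lookup \<alpha>) V"
  have "inj_on ?h ?A"
  proof (rule inj_onI, rule poly_mapping_eqI)
    fix a b i assume a: "a \<in> ?A" and b: "b \<in> ?A" and eq: "?h a = ?h b"
    show "Poly_Mapping.lookup a i = Poly_Mapping.lookup b i"
    proof (cases "i \<in> V")
      case True
      then show ?thesis using eq by (metis restrict_apply')
    next
      case False
      then have "i \<notin> Poly_Mapping.keys a" "i \<notin> Poly_Mapping.keys b"
        using a b by auto
      then show ?thesis by (simp add: in_keys_iff)
    qed
  qed
  moreover have "?h ` ?A \<subseteq> Pi\<^sub>E V (\<lambda>_. {0..m})"
    using lookup_le_mdeg by auto
  moreover have "finite (Pi\<^sub>E V (\<lambda>_. {0..m}))"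
    using assms by (intro finite_PiE) auto
  ultimately show ?thesis
    by (meson finite_imageD finite_subset)
qed

lemma evalp_homog_scale:
  assumes "homog d h"
  shows "evalp h (\<lambda>j. a * v j) = a ^ d * evalp h v"
proof -
  have "evalp h (\<lambda>j. a * v j) = (\<Sum>\<alpha>\<in>Poly_Mapping.keys h. Poly_Mapping.lookup h \<alpha> *
      (a ^ d * (\<Prod>i\<in>Poly_Mapping.keys \<alpha>. v i ^ Poly_Mapping.lookup \<alpha> i)))"
    unfolding evalp_def
  proof (rule sum.cong[OF refl])
    fix \<alpha> assume "\<alpha> \<in> Poly_Mapping.keys h"
    then have "mdeg \<alpha> = d" using assms by (simp add: homog_def)
    then show "Poly_Mapping.lookup h \<alpha> * (\<Prod>i\<in>Poly_Mapping.keys \<alpha>. (a * v i) ^ Poly_Mapping.lookup \<alpha> i) =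
         Poly_Mapping.lookup h \<alpha> * (a ^ d * (\<Prod>i\<in>Poly_Mapping.keys \<alpha>. v i ^ Poly_Mapping.lookup \<alpha> i))"
      by (simp add: power_mult_distrib prod.distrib mdeg_def flip: power_sum)
  qed
  also have "\<dots> = a ^ d * evalp h v"
    by (simp add: evalp_def sum_distrib_left mult_ac)
  finally show ?thesis .
qed

lemma proj_closed_subset: "proj_closed n Y \<Longrightarrow> Y \<subseteq> proj_pts n"
  by (auto simp: proj_closed_def zero_set_def)

lemma proj_closed_scale:
  fixes Y :: "(nat \<Rightarrow> 'k::field) set"
  assumes "proj_closed n Y" "v \<in> Y" "a \<noteq> 0"
  shows "(\<lambda>j. a * v j) \<in> Y"
proof -
  obtain F where F: "\<forall>f\<in>F. \<exists>t. homog t f" "Y = zero_set n F"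
    using assms(1) by (auto simp: proj_closed_def)
  have v: "v \<in> proj_pts n" "\<forall>f\<in>F. evalp f v = 0"
    using assms(2) F(2) by (auto simp: zero_set_def)
  then have "(\<lambda>j. a * v j) \<in> proj_pts n"
    using assms(3) by (auto simp: proj_pts_def fun_eq_iff)
  moreover have "\<forall>f\<in>F. evalp f (\<lambda>j. a * v j) = 0"
    using F(1) v(2) evalp_homog_scale by fastforce
  ultimately show ?thesis
    using F(2) by (simp add: zero_set_def)
qed

definition coord_pt :: "nat \<Rightarrow> 'k::zero \<Rightarrow> nat \<Rightarrow> 'k" where
  "coord_pt c t = (\<lambda>j. if j = c then t else 0)"

lemma coord_pt_in_proj_closed:
  fixes Y :: "(nat \<Rightarrow> 'k::field) set"
  assumes "proj_closed n Y" "v \<in> Y" "\<forall>j. j \<noteq> c \<longrightarrow> v j = 0" "t \<noteq> 0"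
  shows "coord_pt c t \<in> Y"
proof -
  have "v \<in> proj_pts n"
    using proj_closed_subset assms(1,2) by blast
  then have "v c \<noteq> 0"
    using assms(3) by (auto simp: proj_pts_def fun_eq_iff)
  then have eq: "coord_pt c t = (\<lambda>j. t / v c * v j)" and "t / v c \<noteq> 0"
    using assms(3,4) by (auto simp: coord_pt_def fun_eq_iff)
  show ?thesis
    unfolding eq by (rule proj_closed_scale[OF assms(1,2) \<open>t / v c \<noteq> 0\<close>])
qed

definition axis_poly :: "nat \<Rightarrow> 'k::comm_ring_1 mpoly \<Rightarrow> 'k poly" where
  "axis_poly c f = (\<Sum>\<alpha>\<in>Poly_Mapping.keys f. if Poly_Mapping.keys \<alpha> \<subseteq> {c}
      then monom (Poly_Mapping.lookup f \<alpha>) (Poly_Mapping.lookup \<alpha> c) else 0)"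

lemma evalp_coord_pt: "evalp f (coord_pt c t) = poly (axis_poly c f) t"
  unfolding evalp_def axis_poly_def poly_sum
proof (rule sum.cong[OF refl])
  fix \<alpha>
  show "Poly_Mapping.lookup f \<alpha> * (\<Prod>i\<in>Poly_Mapping.keys \<alpha>. coord_pt c t i ^ Poly_Mapping.lookup \<alpha> i) =
    poly (if Poly_Mapping.keys \<alpha> \<subseteq> {c} then monom (Poly_Mapping.lookup f \<alpha>) (Poly_Mapping.lookup \<alpha> c) else 0) t"
  proof (cases "Poly_Mapping.keys \<alpha> \<subseteq> {c}")
    case True
    then consider "Poly_Mapping.keys \<alpha> = {}" | "Poly_Mapping.keys \<alpha> = {c}"
      by blast
    then show ?thesis
      by cases (auto simp: poly_monom coord_pt_def in_keys_iff[symmetric])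
  next
    case False
    then obtain i where "i \<in> Poly_Mapping.keys \<alpha>" "i \<noteq> c" by blast
    then have "(\<Prod>i\<in>Poly_Mapping.keys \<alpha>. coord_pt c t i ^ Poly_Mapping.lookup \<alpha> i) = 0"
      by (intro prod_zero) (auto simp: coord_pt_def in_keys_iff zero_power intro!: bexI[of _ i])
    then show ?thesis using False by simp
  qed
qed

lemma coeff_axis_poly: "coeff (axis_poly c f) k = Poly_Mapping.lookup f (Poly_Mapping.single c k)"
proof -
  have "coeff (axis_poly c f) k =
      (\<Sum>\<alpha>\<in>Poly_Mapping.keys f. if \<alpha> = Poly_Mapping.single c k then Poly_Mapping.lookup f \<alpha> else 0)"
    unfolding axis_poly_def coeff_sum
  proof (rule sum.cong[OF refl])
    fix \<alpha>
    show "coeff (if Poly_Mapping.keys \<alpha> \<subseteq> {c} then monom (Poly_Mapping.lookup f \<alpha>) (Poly_Mapping.lookup \<alpha> c) else 0) k =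
         (if \<alpha> = Poly_Mapping.single c k then Poly_Mapping.lookup f \<alpha> else 0)"
    proof (cases "Poly_Mapping.keys \<alpha> \<subseteq> {c}")
      case True
      then have "\<alpha> = Poly_Mapping.single c k \<longleftrightarrow> Poly_Mapping.lookup \<alpha> c = k"
        by (metis keys_subset_singleton_eq lookup_single_eq)
      then show ?thesis using True by simp
    next
      case False
      then show ?thesis by (auto split: if_splits)
    qed
  qed
  also have "\<dots> = Poly_Mapping.lookup f (Poly_Mapping.single c k)"
    by (simp add: in_keys_iff)
  finally show ?thesis .
qed

lemma lookup_single_eq_0_if_vanishes_on_axis:
  fixes f :: "'k::field_char_0 mpoly"
  assumes "\<forall>t. t \<noteq> 0 \<longrightarrow> evalp f (coord_pt c t) = 0"
  shows "Poly_Mapping.lookup f (Poly_Mapping.single c k) = 0"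
proof -
  have "UNIV - {0} \<subseteq> {t. poly (axis_poly c f) t = 0}"
    using assms by (auto simp: evalp_coord_pt)
  moreover have "infinite (UNIV - {0::'k})"
    using infinite_UNIV_char_0 by auto
  ultimately have "axis_poly c f = 0"
    using poly_roots_finite finite_subset by blast
  then show ?thesis
    by (metis coeff_0 coeff_axis_poly)
qed

text \<open>Such an f has no pure power of x_c, and every other monomial of f involves a
  coordinate of V that vanishes at v.\<close>
lemma evalp_eq_0_if_vanishes_on_axis:
  fixes f :: "'k::field_char_0 mpoly"
  assumes "\<forall>t. t \<noteq> 0 \<longrightarrow> evalp f (coord_pt c t) = 0" and "in_vars V f"
    and "\<forall>j\<in>V. j \<noteq> c \<longrightarrow> v j = 0"
  shows "evalp f v = 0"
  unfolding evalp_def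
proof (rule sum.neutral, rule ballI)
  fix \<alpha> assume \<alpha>: "\<alpha> \<in> Poly_Mapping.keys f"
  show "Poly_Mapping.lookup f \<alpha> * (\<Prod>i\<in>Poly_Mapping.keys \<alpha>. v i ^ Poly_Mapping.lookup \<alpha> i) = 0"
  proof (cases "Poly_Mapping.keys \<alpha> \<subseteq> {c}")
    case True
    then have "Poly_Mapping.lookup f \<alpha> = 0"
      by (metis keys_subset_singleton_eq lookup_single_eq_0_if_vanishes_on_axis[OF assms(1)])
    then show ?thesis by simp
  next
    case False
    then obtain i where i: "i \<in> Poly_Mapping.keys \<alpha>" "i \<noteq> c" by blast
    then have "i \<in> V" using assms(2) \<alpha> by (auto simp: in_vars_def)
    then have "(\<Prod>i\<in>Poly_Mapping.keys \<alpha>. v i ^ Poly_Mapping.lookup \<alpha> i) = 0"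
      using i assms(3) by (intro prod_zero) (auto simp: in_keys_iff intro!: bexI[of _ i])
    then show ?thesis by simp
  qed
qed

lemma single_not_in_init_mons:
  fixes J :: "'k::field_char_0 mpoly set"
  assumes mo: "monomial_order lt" and J: "\<forall>f\<in>J. \<forall>t. t \<noteq> 0 \<longrightarrow> evalp f (coord_pt c t) = 0"
  shows "Poly_Mapping.single c k \<notin> init_mons r lt J"
proof
  assume "Poly_Mapping.single c k \<in> init_mons r lt J"
  then obtain f \<gamma> where f: "Poly_Mapping.single c k = lead_exp r lt f + \<gamma>" "f \<in> J" "f \<noteq> 0"
    by (auto simp: init_mons_def)
  let ?b = "lead_exp r lt f"
  have "Poly_Mapping.keys ?b \<subseteq> {c}"
    using keys_subset_add[of ?b \<gamma>] f(1)
    by (metis empty_subsetI keys_single subset_iff)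
  then have "Poly_Mapping.lookup f ?b = 0"
    by (metis keys_subset_singleton_eq lookup_single_eq_0_if_vanishes_on_axis J f(2))
  then show False
    using lead_exp_greatest(1)[OF mo f(3)] by (simp add: in_keys_iff)
qed

definition restrict_vars :: "nat set \<Rightarrow> 'k::zero mpoly \<Rightarrow> 'k mpoly" where
  "restrict_vars V g = Poly_Mapping.mapp (\<lambda>\<alpha> c. if Poly_Mapping.keys \<alpha> \<subseteq> V then c else 0) g"

lemma lookup_restrict_vars:
  "Poly_Mapping.lookup (restrict_vars V g) \<alpha> =
     (if Poly_Mapping.keys \<alpha> \<subseteq> V then Poly_Mapping.lookup g \<alpha> else 0)"
  by (simp add: restrict_vars_def lookup_mapp when_def in_keys_iff)

lemma keys_restrict_vars:
  "Poly_Mapping.keys (restrict_vars V g) = {\<alpha>\<in>Poly_Mapping.keys g. Poly_Mapping.keys \<alpha> \<subseteq> V}"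
  by (rule set_eqI, subst in_keys_iff) (simp add: lookup_restrict_vars lookup_not_eq_zero_eq_in_keys)

lemma lead_exp_restrict_vars:
  assumes mo: "monomial_order lt" and "g \<noteq> 0" and "Poly_Mapping.keys (lead_exp r lt g) \<subseteq> V"
  shows "restrict_vars V g \<noteq> 0" "lead_exp r lt (restrict_vars V g) = lead_exp r lt g"
proof -
  note lead = lead_exp_greatest[OF mo assms(2), of r]
  then have "lead_exp r lt g \<in> Poly_Mapping.keys (restrict_vars V g)"
    using assms(3) by (simp add: keys_restrict_vars)
  then show "restrict_vars V g \<noteq> 0" by auto
  show "lead_exp r lt (restrict_vars V g) = lead_exp r lt g"
    by (rule lead_exp_eqI[OF mo]) (use lead assms(3) in \<open>auto simp: keys_restrict_vars\<close>)
qed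

lemma evalp_restrict_vars:
  assumes "\<forall>j. j \<notin> V \<longrightarrow> v j = 0"
  shows "evalp (restrict_vars V g) v = evalp g v"
  unfolding evalp_def
proof (rule sum.mono_neutral_cong_left)
  show "\<forall>\<alpha>\<in>Poly_Mapping.keys g - Poly_Mapping.keys (restrict_vars V g).
      Poly_Mapping.lookup g \<alpha> * (\<Prod>i\<in>Poly_Mapping.keys \<alpha>. v i ^ Poly_Mapping.lookup \<alpha> i) = 0"
  proof
    fix \<alpha> assume "\<alpha> \<in> Poly_Mapping.keys g - Poly_Mapping.keys (restrict_vars V g)"
    then obtain j where j: "j \<in> Poly_Mapping.keys \<alpha>" "j \<notin> V"
      by (auto simp: keys_restrict_vars)
    then have "v j ^ Poly_Mapping.lookup \<alpha> j = 0"
      using assms by (simp add: in_keys_iff zero_power)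
    then have "(\<Prod>i\<in>Poly_Mapping.keys \<alpha>. v i ^ Poly_Mapping.lookup \<alpha> i) = 0"
      using j(1) by (intro prod_zero) auto
    then show "Poly_Mapping.lookup g \<alpha> * (\<Prod>i\<in>Poly_Mapping.keys \<alpha>. v i ^ Poly_Mapping.lookup \<alpha> i) = 0"
      by simp
  qed
qed (auto simp: keys_restrict_vars lookup_restrict_vars)

lemma init_mons_van_ideal_in_vars:
  assumes mo: "monomial_order lt" and Y: "\<forall>v\<in>Y. \<forall>j. j \<notin> V \<longrightarrow> v j = 0"
    and "Poly_Mapping.keys \<alpha> \<subseteq> V" and "\<alpha> \<in> init_mons r lt (van_ideal n Y)"
  shows "\<alpha> \<in> init_mons r lt (van_ideal n Y \<inter> {f. in_vars V f})"
proof -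
  obtain g \<gamma> where g: "\<alpha> = lead_exp r lt g + \<gamma>" "g \<in> van_ideal n Y" "g \<noteq> 0"
    using assms(4) by (auto simp: init_mons_def)
  have "Poly_Mapping.keys (lead_exp r lt g) \<subseteq> V"
    using assms(3) g(1) keys_subset_add by blast
  note restrict = lead_exp_restrict_vars[OF mo g(3) this]
  have "evalp (restrict_vars V g) v = 0" if "v \<in> Y" for v
    using that Y g(2) by (simp add: evalp_restrict_vars van_ideal_def)
  then have "restrict_vars V g \<in> van_ideal n Y \<inter> {f. in_vars V f}"
    using g(2) by (auto simp: van_ideal_def in_vars_def keys_restrict_vars)
  then have "lead_exp r lt (restrict_vars V g) + \<gamma> \<in> init_mons r lt (van_ideal n Y \<inter> {f. in_vars V f})"
    using restrict(1) unfolding init_mons_def by blast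
  then show ?thesis
    using restrict(2) g(1) by simp
qed

lemma single_in_van_ideal:
  assumes "Poly_Mapping.keys \<alpha> \<subseteq> {0..n}" "j \<in> Poly_Mapping.keys \<alpha>" "\<forall>v\<in>Y. v j = 0"
  shows "Poly_Mapping.single \<alpha> (1::'k::comm_ring_1) \<in> van_ideal n Y"
proof -
  have "evalp (Poly_Mapping.single \<alpha> (1::'k)) v = 0" if "v \<in> Y" for v
  proof -
    have "v j ^ Poly_Mapping.lookup \<alpha> j = 0"
      using assms(2,3) that by (auto simp: in_keys_iff zero_power)
    then have "(\<Prod>i\<in>Poly_Mapping.keys \<alpha>. v i ^ Poly_Mapping.lookup \<alpha> i) = 0"
      using assms(2) by (intro prod_zero) auto
    then show ?thesis
      by (simp add: evalp_def)
  qed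
  then show ?thesis
    using assms(1) by (simp add: van_ideal_def in_vars_def)
qed

definition std_mons :: "nat set \<Rightarrow> 'k::zero mpoly set \<Rightarrow> (nat \<Rightarrow> int)
      \<Rightarrow> ((nat \<Rightarrow>\<^sub>0 nat) \<Rightarrow> (nat \<Rightarrow>\<^sub>0 nat) \<Rightarrow> bool) \<Rightarrow> nat \<Rightarrow> (nat \<Rightarrow>\<^sub>0 nat) set" where
  "std_mons V J r lt m =
     {\<alpha>. mdeg \<alpha> = m \<and> Poly_Mapping.keys \<alpha> \<subseteq> V \<and> \<alpha> \<notin> init_mons r lt J}"

lemma finite_std_mons: "finite V \<Longrightarrow> finite (std_mons V J r lt m)"
  unfolding std_mons_def
  by (rule finite_subset[OF _ finite_monomials_of_degree[of V m]]) auto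

definition std_weight :: "nat set \<Rightarrow> 'k::zero mpoly set \<Rightarrow> (nat \<Rightarrow> int)
      \<Rightarrow> ((nat \<Rightarrow>\<^sub>0 nat) \<Rightarrow> (nat \<Rightarrow>\<^sub>0 nat) \<Rightarrow> bool) \<Rightarrow> nat \<Rightarrow> int" where
  "std_weight V J r lt m = (\<Sum>\<alpha>\<in>std_mons V J r lt m. wt r \<alpha>)"

lemma hm_index_std_weight:
  "hm_index V J P r lt m = - of_int (std_weight V J r lt m)
     + of_nat m * poly P (of_nat m) / of_nat (card V) * of_int (\<Sum>i\<in>V. r i)"
  by (simp add: hm_index_def std_weight_def std_mons_def)

lemma sum_Union_chain:
  fixes S :: "nat \<Rightarrow> 'a set" and w :: "'a \<Rightarrow> 'b::ab_group_add"
  assumes "\<And>i. finite (S i)"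
    and "\<And>i j. 1 \<le> i \<Longrightarrow> Suc i < j \<Longrightarrow> j \<le> l \<Longrightarrow> S i \<inter> S j = {}"
    and "\<And>i. 1 \<le> i \<Longrightarrow> i < l \<Longrightarrow> S i \<inter> S (Suc i) = {p i}"
  shows "sum w (\<Union>i\<in>{1..l}. S i) = (\<Sum>i=1..l. sum w (S i)) - (\<Sum>i=1..l - 1. w (p i))"
  using assms(2,3)
proof (induction l)
  case 0
  then show ?case by simp
next
  case (Suc l)
  show ?case
  proof (cases "l = 0")
    case True
    then show ?thesis by simp
  next
    case False
    let ?U = "\<Union>i\<in>{1..l}. S i"
    have disj: "S i \<inter> S (Suc l) = {}" if "i \<in> {1..l - 1}" for i
      using that False by (intro Suc.prems(1)) auto
    have split: "{1..l} = insert l {1..l - 1}"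
      using False by auto
    have "?U \<inter> S (Suc l) = S l \<inter> S (Suc l)"
      unfolding split using disj by blast
    also have "\<dots> = {p l}"
      using Suc.prems(2) False by simp
    finally have "sum w (?U \<inter> S (Suc l)) = w (p l)"
      by simp
    then have "sum w (?U \<union> S (Suc l)) = sum w ?U + sum w (S (Suc l)) - w (p l)"
      using sum.union_inter[of ?U "S (Suc l)" w] assms(1) by (simp add: eq_diff_eq)
    also have "sum w ?U = (\<Sum>i=1..l. sum w (S i)) - (\<Sum>i=1..l - 1. w (p i))"
      using Suc by simp
    also have "(\<Sum>i=1..l - 1. w (p i)) = (\<Sum>i=1..l. w (p i)) - w (p l)"
      unfolding split using False by simp
    also have "?U \<union> S (Suc l) = (\<Union>i\<in>{1..Suc l}. S i)"
      by (auto simp: atLeastAtMostSuc_conv)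
    finally show ?thesis
      by (simp add: algebra_simps)
  qed
qed

locale projective_chain =
  fixes n l :: nat and ns :: "nat \<Rightarrow> nat" and X :: "nat \<Rightarrow> (nat \<Rightarrow> 'k::field_char_0) set"
  assumes ns_step: "\<And>i. i < l \<Longrightarrow> ns i < ns (Suc i)"
    and ns_last: "ns l = n"
    and closed: "\<And>i. i \<in> {1..l} \<Longrightarrow> proj_closed n (X i)"
    and adjacent_meet: "\<And>i. 1 \<le> i \<Longrightarrow> i < l \<Longrightarrow> X i \<inter> X (Suc i) \<noteq> {}"
    and supported: "\<And>i v j. i \<in> {1..l} \<Longrightarrow> v \<in> X i \<Longrightarrow> j \<notin> {ns (i - 1)..ns i} \<Longrightarrow> v j = 0"
begin

definition block :: "nat \<Rightarrow> nat set" where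
  "block i = {ns (i - 1)..ns i}"

definition block_ideal :: "nat \<Rightarrow> 'k mpoly set" where
  "block_ideal i = van_ideal n (X i) \<inter> {f. in_vars (block i) f}"

definition chain_ideal :: "'k mpoly set" where
  "chain_ideal = (\<Inter>i\<in>{1..l}. van_ideal n (X i))"

lemma ns_less: "i < j \<Longrightarrow> j \<le> l \<Longrightarrow> ns i < ns j"
proof (induction j)
  case (Suc j)
  then show ?case
    using ns_step[of j] by (auto simp: less_Suc_eq)
qed simp

lemma ns_le: "i \<le> j \<Longrightarrow> j \<le> l \<Longrightarrow> ns i \<le> ns j"
  using ns_less[of i j] by (cases "i = j") auto

lemma block_subset: "i \<le> l \<Longrightarrow> block i \<subseteq> {0..n}"
  using ns_le[of i l] ns_last by (auto simp: block_def)

lemma coord_line_in_adjacent: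
  assumes "1 \<le> i" "i < l" "t \<noteq> 0"
  shows "coord_pt (ns i) t \<in> X i" and "coord_pt (ns i) t \<in> X (Suc i)"
proof -
  obtain v where v: "v \<in> X i" "v \<in> X (Suc i)"
    using adjacent_meet assms by blast
  have "v j = 0" if "j \<noteq> ns i" for j
  proof (cases "j < ns i")
    case True
    then show ?thesis using supported[of "Suc i" v j] v(2) assms by auto
  next
    case False
    then show ?thesis using supported[of i v j] v(1) that assms by auto
  qed
  then show "coord_pt (ns i) t \<in> X i" "coord_pt (ns i) t \<in> X (Suc i)"
    using coord_pt_in_proj_closed[OF closed v(1)] coord_pt_in_proj_closed[OF closed v(2)] assms
    by auto
qed

lemma block_ideal_subset: "k \<in> {1..l} \<Longrightarrow> block_ideal k \<subseteq> chain_ideal"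
proof
  fix f assume k: "k \<in> {1..l}" and "f \<in> block_ideal k"
  then have f: "f \<in> van_ideal n (X k)" "in_vars (block k) f"
    by (auto simp: block_ideal_def)
  have "evalp f v = 0" if j: "j \<in> {1..l}" and v: "v \<in> X j" for j v
  proof (cases j k rule: linorder_cases)
    case less
    have "\<forall>t. t \<noteq> 0 \<longrightarrow> evalp f (coord_pt (ns (k - 1)) t) = 0"
      using f(1) coord_line_in_adjacent(2)[of "k - 1"] less j k by (auto simp: van_ideal_def)
    moreover have "ns j \<le> ns (k - 1)"
      using ns_le less k by simp
    then have "\<forall>x\<in>block k. x \<noteq> ns (k - 1) \<longrightarrow> v x = 0"
      using supported[OF j v] by (force simp: block_def)
    ultimately show ?thesis
      by (rule evalp_eq_0_if_vanishes_on_axis[OF _ f(2)])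
  next
    case equal
    then show ?thesis using f(1) v by (simp add: van_ideal_def)
  next
    case greater
    have "\<forall>t. t \<noteq> 0 \<longrightarrow> evalp f (coord_pt (ns k) t) = 0"
      using f(1) coord_line_in_adjacent(1)[of k] greater j k by (auto simp: van_ideal_def)
    moreover have "ns k \<le> ns (j - 1)"
      using ns_le greater j by simp
    then have "\<forall>x\<in>block k. x \<noteq> ns k \<longrightarrow> v x = 0"
      using supported[OF j v] by (force simp: block_def)
    ultimately show ?thesis
      by (rule evalp_eq_0_if_vanishes_on_axis[OF _ f(2)])
  qed
  then show "f \<in> chain_ideal"
    using f(1) by (auto simp: chain_ideal_def van_ideal_def)
qed

lemma init_mons_chain_ideal_iff:
  assumes mo: "monomial_order lt" and k: "k \<in> {1..l}" and "Poly_Mapping.keys \<alpha> \<subseteq> block k"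
  shows "\<alpha> \<in> init_mons r lt chain_ideal \<longleftrightarrow> \<alpha> \<in> init_mons r lt (block_ideal k)"
proof
  assume "\<alpha> \<in> init_mons r lt chain_ideal"
  moreover have "chain_ideal \<subseteq> van_ideal n (X k)"
    using k by (auto simp: chain_ideal_def)
  ultimately have "\<alpha> \<in> init_mons r lt (van_ideal n (X k))"
    using init_mons_mono by blast
  moreover have "\<forall>v\<in>X k. \<forall>j. j \<notin> block k \<longrightarrow> v j = 0"
    using supported k by (auto simp: block_def)
  ultimately show "\<alpha> \<in> init_mons r lt (block_ideal k)"
    unfolding block_ideal_def using init_mons_van_ideal_in_vars[OF mo _ assms(3)] by blast
next
  assume "\<alpha> \<in> init_mons r lt (block_ideal k)"
  then show "\<alpha> \<in> init_mons r lt chain_ideal"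
    using init_mons_mono[OF block_ideal_subset[OF k]] by blast
qed

lemma off_blocks_in_init_mons:
  assumes mo: "monomial_order lt" and "Poly_Mapping.keys \<alpha> \<subseteq> {0..n}"
    and "\<forall>k\<in>{1..l}. \<not> Poly_Mapping.keys \<alpha> \<subseteq> block k"
  shows "\<alpha> \<in> init_mons r lt chain_ideal"
proof (rule single_in_init_mons[OF mo])
  show "Poly_Mapping.single \<alpha> 1 \<in> chain_ideal"
    unfolding chain_ideal_def
  proof
    fix k assume k: "k \<in> {1..l}"
    then obtain j where "j \<in> Poly_Mapping.keys \<alpha>" "j \<notin> block k"
      using assms(3) by blast
    then show "Poly_Mapping.single \<alpha> 1 \<in> van_ideal n (X k)"
      using single_in_van_ideal[OF assms(2)] supported[OF k] by (auto simp: block_def)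
  qed
qed

lemma std_mons_chain_ideal:
  assumes mo: "monomial_order lt"
  shows "std_mons {0..n} chain_ideal r lt m = (\<Union>k\<in>{1..l}. std_mons (block k) (block_ideal k) r lt m)"
  using off_blocks_in_init_mons[OF mo] init_mons_chain_ideal_iff[OF mo] block_subset
  by (fastforce simp: std_mons_def)

lemma std_mons_adjacent_inter:
  assumes mo: "monomial_order lt" and i: "1 \<le> i" "i < l"
  shows "std_mons (block i) (block_ideal i) r lt m \<inter> std_mons (block (Suc i)) (block_ideal (Suc i)) r lt m
    = {Poly_Mapping.single (ns i) m}"
proof (intro equalityI subsetI)
  have "block i \<inter> block (Suc i) = {ns i}"
    using ns_le[of "i - 1" i] ns_step[of i] i by (auto simp: block_def)
  moreover fix \<alpha>
  assume "\<alpha> \<in> std_mons (block i) (block_ideal i) r lt m \<inter> std_mons (block (Suc i)) (block_ideal (Suc i)) r lt m"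
  then have "Poly_Mapping.keys \<alpha> \<subseteq> block i \<inter> block (Suc i)" "mdeg \<alpha> = m"
    by (auto simp: std_mons_def)
  ultimately show "\<alpha> \<in> {Poly_Mapping.single (ns i) m}"
    by (metis keys_subset_singleton_eq mdeg_single singletonI)
next
  have "ns i \<in> block i" "ns i \<in> block (Suc i)"
    using ns_le[of "i - 1" i] ns_step[of i] i by (auto simp: block_def)
  moreover have "Poly_Mapping.single (ns i) m \<notin> init_mons r lt (block_ideal k)" if "k \<in> {i, Suc i}" for k
    by (rule single_not_in_init_mons[OF mo])
      (use coord_line_in_adjacent[OF i] that in \<open>auto simp: block_ideal_def van_ideal_def\<close>)
  ultimately show "\<alpha> \<in> std_mons (block i) (block_ideal i) r lt m \<inter> std_mons (block (Suc i)) (block_ideal (Suc i)) r lt m"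
    if "\<alpha> \<in> {Poly_Mapping.single (ns i) m}" for \<alpha>
    using that by (auto simp: std_mons_def mdeg_single)
qed

lemma std_mons_disjoint:
  assumes "1 \<le> i" "Suc i < j" "j \<le> l" "m > 0"
  shows "std_mons (block i) (block_ideal i) r lt m \<inter> std_mons (block j) (block_ideal j) r lt m = {}"
proof -
  have "ns i < ns (j - 1)"
    using ns_less assms by simp
  then have "block i \<inter> block j = {}"
    by (auto simp: block_def)
  moreover have "Poly_Mapping.keys \<alpha> \<noteq> {}" if "mdeg \<alpha> = m" for \<alpha>
    using that assms(4) by (auto simp: mdeg_def)
  ultimately have False
    if "mdeg \<alpha> = m" "Poly_Mapping.keys \<alpha> \<subseteq> block i" "Poly_Mapping.keys \<alpha> \<subseteq> block j" for \<alpha>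
    using that by blast
  then show ?thesis
    by (auto simp: std_mons_def)
qed

lemma std_weight_chain_ideal:
  assumes mo: "monomial_order lt" and "m > 0"
  shows "std_weight {0..n} chain_ideal r lt m
    = (\<Sum>i=1..l. std_weight (block i) (block_ideal i) r lt m) - int m * (\<Sum>i=1..l - 1. r (ns i))"
  unfolding std_weight_def std_mons_chain_ideal[OF mo]
  using sum_Union_chain[of "\<lambda>i. std_mons (block i) (block_ideal i) r lt m" l
      "\<lambda>i. Poly_Mapping.single (ns i) m" "wt r"]
    std_mons_disjoint std_mons_adjacent_inter[OF mo] assms(2)
  by (simp add: finite_std_mons block_def wt_single sum_distrib_left)

lemma hm_index_chain_ideal:
  assumes mo: "monomial_order lt" and m: "m > 0"
  shows "hm_index {0..n} chain_ideal P r lt m =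
          (\<Sum>i=1..l. hm_index (block i) (block_ideal i) (Ps i) r lt m)
        - (\<Sum>i=1..l. of_nat m * poly (Ps i) (of_nat m) / of_nat (ns i - ns (i - 1) + 1)
            * of_int (\<Sum>k\<in>block i. r k))
        + of_nat m * poly P (of_nat m) / of_nat (n + 1) * of_int (\<Sum>i=0..n. r i)
        + of_nat m * of_int (\<Sum>i=1..l - 1. r (ns i))"
proof -
  have card_block: "card (block i) = ns i - ns (i - 1) + 1" if "i \<in> {1..l}" for i
    using ns_le[of "i - 1" i] that by (simp add: block_def)
  have blocks: "(\<Sum>i=1..l. hm_index (block i) (block_ideal i) (Ps i) r lt m) =
      (\<Sum>i=1..l. of_nat m * poly (Ps i) (of_nat m) / of_nat (ns i - ns (i - 1) + 1)
          * of_int (\<Sum>k\<in>block i. r k))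
      - of_int (\<Sum>i=1..l. std_weight (block i) (block_ideal i) r lt m)"
    by (simp add: hm_index_std_weight card_block sum_subtractf)
  have chain: "of_int (std_weight {0..n} chain_ideal r lt m) =
      of_int (\<Sum>i=1..l. std_weight (block i) (block_ideal i) r lt m)
      - (of_nat m * of_int (\<Sum>i=1..l - 1. r (ns i)) :: rat)"
    by (simp only: std_weight_chain_ideal[OF mo m] of_int_diff of_int_mult of_int_of_nat_eq)
  show ?thesis
    unfolding blocks hm_index_std_weight[of "{0..n}"] chain by simp
qed

end

theorem proposition1p6:
  fixes n l m :: nat
    and ns :: "nat \<Rightarrow> nat"
    and X :: "nat \<Rightarrow> (nat \<Rightarrow> 'k::field_char_0) set"
    and r :: "nat \<Rightarrow> int"
    and lt :: "(nat \<Rightarrow>\<^sub>0 nat) \<Rightarrow> (nat \<Rightarrow>\<^sub>0 nat) \<Rightarrow> bool"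
    and P :: "rat poly" and Ps :: "nat \<Rightarrow> rat poly"
  assumes k_closed: "alg_closed TYPE('k)"
    and l_pos: "l \<ge> 1"
    and ns0: "ns 0 = 0" and nsl: "ns l = n"
    and ns_mono: "\<forall>i<l. ns i < ns (Suc i)"
    and subvar: "\<forall>i\<in>{1..l}. proj_subvariety n (X i)"
    and chain: "\<forall>i\<in>{1..l}. \<forall>j\<in>{1..l}. i \<noteq> j \<longrightarrow>
                  (X i \<inter> X j \<noteq> {} \<longleftrightarrow> i = j + 1 \<or> j = i + 1)"
    and contained: "\<forall>i\<in>{1..l}. \<forall>v\<in>X i. \<forall>j\<le>n. j < ns (i - 1) \<or> ns i < j \<longrightarrow> v j = 0"
    and mono_ord: "monomial_order lt"
    and HP: "is_hilbert_poly {0..n} (\<Inter>i\<in>{1..l}. van_ideal n (X i)) P"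
    and HPi: "\<forall>i\<in>{1..l}. is_hilbert_poly {ns (i - 1)..ns i}
                 (van_ideal n (X i) \<inter> {f. in_vars {ns (i - 1)..ns i} f}) (Ps i)"
    and m_pos: "m > 0"
    and m_reg: "\<forall>t\<ge>m. of_nat (hilb_fun {0..n} (\<Inter>i\<in>{1..l}. van_ideal n (X i)) t)
                        = poly P (of_nat t)"
    and m_regi: "\<forall>i\<in>{1..l}. \<forall>t\<ge>m.
                   of_nat (hilb_fun {ns (i - 1)..ns i}
                     (van_ideal n (X i) \<inter> {f. in_vars {ns (i - 1)..ns i} f}) t)
                   = poly (Ps i) (of_nat t)"
  shows "hm_index {0..n} (\<Inter>i\<in>{1..l}. van_ideal n (X i)) P r lt m =
           (\<Sum>i=1..l. hm_index {ns (i - 1)..ns i}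
               (van_ideal n (X i) \<inter> {f. in_vars {ns (i - 1)..ns i} f}) (Ps i) r lt m)
         - (\<Sum>i=1..l. of_nat m * poly (Ps i) (of_nat m) / of_nat (ns i - ns (i - 1) + 1)
               * of_int (\<Sum>k=ns (i - 1)..ns i. r k))
         + of_nat m * poly P (of_nat m) / of_nat (n + 1) * of_int (\<Sum>i=0..n. r i)
         + of_nat m * of_int (\<Sum>i=1..l - 1. r (ns i))"
proof -
  \<comment> \<open>Only closedness of the X_i enters: the index evaluates the Hilbert polynomials at m
    directly.\<close>
  have closed: "proj_closed n (X i)" if "i \<in> {1..l}" for i
    using subvar that by (simp add: proj_subvariety_def)
  have supported: "v j = 0" if "i \<in> {1..l}" "v \<in> X i" "j \<notin> {ns (i - 1)..ns i}" for i v j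
  proof (cases "j \<le> n")
    case True
    then show ?thesis using contained that by auto
  next
    case False
    then show ?thesis
      using proj_closed_subset[OF closed[OF that(1)]] that(2) by (auto simp: proj_pts_def)
  qed
  interpret projective_chain n l ns X
    by unfold_locales (use ns_mono nsl closed chain supported in auto)
  show ?thesis
    using hm_index_chain_ideal[OF mono_ord m_pos]
    unfolding chain_ideal_def block_ideal_def block_def .
qed

end
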